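(* Consider the dissemination stage described in the context on a connected non-bipartite graph, with $N$ large enough that $g(N)>\ln N$. If each agent sets off $hg(N)$ MHRW tokens, then with probability at least $1-\frac{1}{N^{h/3}}$ all these walks complete their $L$ steps, and hence reach the $\frac1{N^3}$-nearly uniform distribution $[\frac1N-\frac1{N^3},\frac1N+\frac1{N^3}]$ over agents, within $O(\log^2N)$ slots.
   Context: $\mathcal G=(\mathcal N,\mathcal E)$ is a connected, non-bipartite undirected graph on agents $\mathcal N=\{1,\dots,N\}$; $\mathcal N_i$ is the neighbor set of $i$, $N_i=|\mathcal N_i|$. The function $g:\mathbb N^+\to\mathbb R$ satisfies: for every real $\ell>0$, $g(N)>\ell\ln N$ and $g(N)<\ell N$ for all sufficiently large $N$. Let $\beta\in(1/2,1)$, $\sigma\ge11$, $h=16\sigma/(1-\beta)$. Metropolis–Hastings random walk (MHRW): from $i$ move to $i'\in\mathcal N_i$ with probability $\Psi(i,i')=\min\{1/N_i,1/N_{i'}\}$ and stay at $i$ with probability $1-\sum_{k\in\mathcal N_i}\Psi(i,k)$. The walk length $L=O(\log N)$ is chosen so that from any start the position after $L$ steps is at each agent with probability in $[\frac1N-\frac1{N^3},\frac1N+\frac1{N^3}]$. Time is slotted and synchronous. Dissemination: each agent launches $hg(N)$ independent tokens, each to be forwarded $L$ times; each agent stores received tokens with positive remaining length in a FIFO queue and in every slot pops up to $hg(N)$ of them, decrements their remaining length, and forwards each to a node chosen according to $\Psi(i,\cdot)$. *)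

theory Defs
  imports "HOL-Probability.Probability"
begin

definition agents :: "nat \<Rightarrow> nat set" where
  "agents N = {1..N}"

definition simple_graph :: "nat \<Rightarrow> (nat \<Rightarrow> nat \<Rightarrow> bool) \<Rightarrow> bool" where
  "simple_graph N E \<longleftrightarrow>
     (\<forall>u v. E u v \<longrightarrow> u \<in> agents N \<and> v \<in> agents N) \<and>
     (\<forall>u v. E u v \<longrightarrow> E v u) \<and> (\<forall>u. \<not> E u u)"

definition connected_graph :: "nat \<Rightarrow> (nat \<Rightarrow> nat \<Rightarrow> bool) \<Rightarrow> bool" where
  "connected_graph N E \<longleftrightarrow> (\<forall>u\<in>agents N. \<forall>v\<in>agents N. E\<^sup>*\<^sup>* u v)"

definition bipartite_graph :: "nat \<Rightarrow> (nat \<Rightarrow> nat \<Rightarrow> bool) \<Rightarrow> bool" where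
  "bipartite_graph N E \<longleftrightarrow>
     (\<exists>c :: nat \<Rightarrow> bool. \<forall>u\<in>agents N. \<forall>v\<in>agents N. E u v \<longrightarrow> c u \<noteq> c v)"

definition nbrs :: "nat \<Rightarrow> (nat \<Rightarrow> nat \<Rightarrow> bool) \<Rightarrow> nat \<Rightarrow> nat set" where
  "nbrs N E i = {j \<in> agents N. E i j}"

definition Psi :: "nat \<Rightarrow> (nat \<Rightarrow> nat \<Rightarrow> bool) \<Rightarrow> nat \<Rightarrow> nat \<Rightarrow> real" where
  "Psi N E i j =
     (if j \<in> nbrs N E i then min (1 / real (card (nbrs N E i))) (1 / real (card (nbrs N E j)))
      else if j = i then 1 - (\<Sum>k\<in>nbrs N E i. min (1 / real (card (nbrs N E i))) (1 / real (card (nbrs N E k))))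
      else 0)"

definition mhrw_step :: "nat \<Rightarrow> (nat \<Rightarrow> nat \<Rightarrow> bool) \<Rightarrow> nat \<Rightarrow> nat pmf" where
  "mhrw_step N E i = embed_pmf (Psi N E i)"

fun mhrw_walk :: "nat \<Rightarrow> (nat \<Rightarrow> nat \<Rightarrow> bool) \<Rightarrow> nat \<Rightarrow> nat \<Rightarrow> nat pmf" where
  "mhrw_walk N E i 0 = return_pmf i"
| "mhrw_walk N E i (Suc n) = bind_pmf (mhrw_walk N E i n) (mhrw_step N E)"

definition nearly_uniform_length :: "nat \<Rightarrow> (nat \<Rightarrow> nat \<Rightarrow> bool) \<Rightarrow> nat \<Rightarrow> bool" where
  "nearly_uniform_length N E L \<longleftrightarrow>
     (\<forall>i\<in>agents N. \<forall>j\<in>agents N.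
        1 / real N - 1 / real N ^ 3 \<le> pmf (mhrw_walk N E i L) j \<and>
        pmf (mhrw_walk N E i L) j \<le> 1 / real N + 1 / real N ^ 3)"

text \<open>Dissemination state: for every agent its FIFO queue, holding the remaining
  lengths of the stored tokens (head = first to be popped).\<close>
type_synonym dstate = "nat \<Rightarrow> nat list"

definition dissem_init :: "nat \<Rightarrow> nat \<Rightarrow> nat \<Rightarrow> dstate" where
  "dissem_init N k L = (\<lambda>i. if i \<in> agents N then filter (\<lambda>r. 0 < r) (replicate k L) else [])"

definition popped_idx :: "nat \<Rightarrow> nat \<Rightarrow> dstate \<Rightarrow> (nat \<times> nat) set" where
  "popped_idx N k Q = {(i, j). i \<in> agents N \<and> j < length (take k (Q i))}"

definition dissem_update :: "nat \<Rightarrow> nat \<Rightarrow> dstate \<Rightarrow> (nat \<times> nat \<Rightarrow> nat) \<Rightarrow> dstate" where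
  "dissem_update N k Q d = (\<lambda>v.
     if v \<in> agents N then
       drop k (Q v) @
       concat (map (\<lambda>i. [take k (Q i) ! j - 1. j \<leftarrow> [0..<length (take k (Q i))],
                                d (i, j) = v \<and> 1 < take k (Q i) ! j]) [1..<Suc N])
     else [])"

definition dissem_step :: "nat \<Rightarrow> (nat \<Rightarrow> nat \<Rightarrow> bool) \<Rightarrow> nat \<Rightarrow> dstate \<Rightarrow> dstate pmf" where
  "dissem_step N E k Q =
     map_pmf (dissem_update N k Q)
       (Pi_pmf (popped_idx N k Q) 0 (\<lambda>(i, j). mhrw_step N E i))"

text \<open>Distribution of the state after t slots, k = tokens launched / popped per slot.\<close>
fun dissem :: "nat \<Rightarrow> (nat \<Rightarrow> nat \<Rightarrow> bool) \<Rightarrow> nat \<Rightarrow> nat \<Rightarrow> nat \<Rightarrow> dstate pmf" where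
  "dissem N E k L 0 = return_pmf (dissem_init N k L)"
| "dissem N E k L (Suc t) = bind_pmf (dissem N E k L t) (dissem_step N E k)"

definition all_walks_done :: "nat \<Rightarrow> dstate set" where
  "all_walks_done N = {Q. \<forall>i\<in>agents N. Q i = []}"

end

theory Submission
  imports Defs
begin

(* Every agent pops at most k = \<lceil>h g(N)\<rceil> tokens per slot and the MHRW matrix is doubly
   stochastic, so the number of tokens an agent receives in a slot is a sum of independent
   Bernoulli variables whose means add up to at most k. Bounding E exp(\<theta> |queue|) slot by slot
   (a Chernoff argument) shows that with probability 1 - N^(-h/3) no queue exceeds B k tokens
   during the first T = O(log^2 N) slots. On that event every hop of a token waits at most
   B slots, so all walks of length L = O(log N) are finished after B L \<le> T slots. *)

section \<open>Metropolis--Hastings transition matrix\<close>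

lemma finite_agents [simp]: "finite (agents N)"
  by (simp add: agents_def)

lemma finite_nbrs [simp]: "finite (nbrs N E i)"
  by (simp add: nbrs_def)

lemma Psi_nonneg: "0 \<le> Psi N E i j"
proof -
  have "(\<Sum>k\<in>nbrs N E i. min (1 / real (card (nbrs N E i))) (1 / real (card (nbrs N E k))))
        \<le> (\<Sum>k\<in>nbrs N E i. 1 / real (card (nbrs N E i)))"
    by (intro sum_mono) auto
  also have "\<dots> \<le> 1"
    by (cases "card (nbrs N E i) = 0") auto
  finally show ?thesis
    by (auto simp: Psi_def)
qed

lemma Psi_eq_0_outside:
  assumes "simple_graph N E" "i \<in> agents N" "j \<notin> agents N"
  shows "Psi N E i j = 0"
  using assms by (auto simp: Psi_def nbrs_def)

lemma sum_Psi_row: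
  assumes G: "simple_graph N E" and i: "i \<in> agents N"
  shows "(\<Sum>j\<in>agents N. Psi N E i j) = 1"
proof -
  let ?S = "nbrs N E i"
  let ?w = "\<lambda>k. min (1 / real (card ?S)) (1 / real (card (nbrs N E k)))"
  have i_notin: "i \<notin> ?S"
    using G by (auto simp: simple_graph_def nbrs_def)
  have agents_split: "agents N = insert i ?S \<union> (agents N - insert i ?S)"
    using i by (auto simp: nbrs_def)
  have "(\<Sum>j\<in>agents N. Psi N E i j) = (\<Sum>j\<in>insert i ?S. Psi N E i j)"
    by (subst agents_split, subst sum.union_disjoint) (auto simp: Psi_def intro!: sum.neutral)
  also have "\<dots> = Psi N E i i + (\<Sum>j\<in>?S. ?w j)"
    using i_notin by (simp add: Psi_def cong: sum.cong)
  also have "Psi N E i i = 1 - (\<Sum>j\<in>?S. ?w j)"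
    using i_notin by (simp add: Psi_def)
  finally show ?thesis by simp
qed

lemma Psi_sym:
  assumes "simple_graph N E"
  shows "Psi N E i j = Psi N E j i"
proof (cases "i = j")
  case False
  have "j \<in> nbrs N E i \<longleftrightarrow> i \<in> nbrs N E j"
    using assms by (auto simp: simple_graph_def nbrs_def)
  then show ?thesis
    using False by (auto simp: Psi_def min.commute)
qed simp

lemma sum_Psi_column:
  assumes "simple_graph N E" "v \<in> agents N"
  shows "(\<Sum>i\<in>agents N. Psi N E i v) = 1"
  using sum_Psi_row[OF assms] Psi_sym[OF assms(1)] by simp

lemma pmf_mhrw_step:
  assumes G: "simple_graph N E" and i: "i \<in> agents N"
  shows "pmf (mhrw_step N E i) j = Psi N E i j"
proof -
  have "(\<integral>\<^sup>+x. ennreal (Psi N E i x) \<partial>count_space UNIV) = (\<Sum>x\<in>agents N. ennreal (Psi N E i x))"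
    by (intro nn_integral_count_space') (auto simp: Psi_eq_0_outside[OF G i])
  also have "\<dots> = 1"
    using sum_Psi_row[OF G i] by (simp add: sum_ennreal Psi_nonneg)
  finally show ?thesis
    unfolding mhrw_step_def by (intro pmf_embed_pmf) (auto simp: Psi_nonneg)
qed

lemma two_le_if_not_bipartite:
  assumes "simple_graph N E" "\<not> bipartite_graph N E"
  shows "2 \<le> N"
proof (rule ccontr)
  assume "\<not> 2 \<le> N"
  then have "u = v" if "u \<in> agents N" "v \<in> agents N" for u v
    using that by (simp add: agents_def)
  then have "bipartite_graph N E"
    using assms(1) unfolding bipartite_graph_def simple_graph_def by blast
  with assms(2) show False ..
qed

section \<open>Exponential moments of independent indicators\<close>

lemma nn_integral_exp_indicator_le:
  fixes \<theta> :: real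
  assumes "0 \<le> \<theta>"
  shows "(\<integral>\<^sup>+y. ennreal (exp (\<theta> * indicator A y)) \<partial>measure_pmf M)
           \<le> ennreal (exp ((exp \<theta> - 1) * measure_pmf.prob M A))"
proof -
  have el: "0 \<le> exp \<theta> - 1"
    using assms by simp
  have "(\<integral>\<^sup>+y. ennreal (exp (\<theta> * indicator A y)) \<partial>measure_pmf M)
      = (\<integral>\<^sup>+y. 1 + ennreal (exp \<theta> - 1) * indicator A y \<partial>measure_pmf M)"
    using el ennreal_plus[of 1 "exp \<theta> - 1"] by (intro nn_integral_cong) (auto simp: indicator_def)
  also have "\<dots> = ennreal (1 + (exp \<theta> - 1) * measure_pmf.prob M A)"
    using el by (simp add: nn_integral_add nn_integral_cmult_indicator
        measure_pmf.emeasure_eq_measure ennreal_mult ennreal_plus)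
  also have "\<dots> \<le> ennreal (exp ((exp \<theta> - 1) * measure_pmf.prob M A))"
    by (intro ennreal_leI) (metis add.commute exp_ge_add_one_self)
  finally show ?thesis .
qed

lemma nn_integral_exp_card_Pi_pmf_le:
  fixes \<theta> :: real
  assumes I: "finite I" and \<theta>: "0 \<le> \<theta>"
  shows "(\<integral>\<^sup>+d. ennreal (exp (\<theta> * card {x\<in>I. d x \<in> A x})) \<partial>measure_pmf (Pi_pmf I dflt M))
           \<le> ennreal (exp ((exp \<theta> - 1) * (\<Sum>x\<in>I. measure_pmf.prob (M x) (A x))))"
proof -
  have card_eq: "real (card {x\<in>I. d x \<in> A x}) = (\<Sum>x\<in>I. indicator (A x) (d x))" for d
    using I by (simp add: indicator_def sum.If_cases Int_def)
  have exp_card: "exp (\<theta> * card {x\<in>I. d x \<in> A x}) = (\<Prod>x\<in>I. exp (\<theta> * indicator (A x) (d x)))" for d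
    by (simp only: card_eq sum_distrib_left exp_sum[OF I])
  have "(\<integral>\<^sup>+d. ennreal (exp (\<theta> * card {x\<in>I. d x \<in> A x})) \<partial>measure_pmf (Pi_pmf I dflt M))
      = (\<integral>\<^sup>+d. (\<Prod>x\<in>I. ennreal (exp (\<theta> * indicator (A x) (d x)))) \<partial>measure_pmf (Pi_pmf I dflt M))"
    by (simp add: exp_card prod_ennreal)
  also have "\<dots> = (\<Prod>x\<in>I. \<integral>\<^sup>+y. ennreal (exp (\<theta> * indicator (A x) y)) \<partial>measure_pmf (M x))"
    using I by (rule nn_integral_prod_Pi_pmf)
  also have "\<dots> \<le> (\<Prod>x\<in>I. ennreal (exp ((exp \<theta> - 1) * measure_pmf.prob (M x) (A x))))"
    using \<theta> by (intro prod_mono_ennreal nn_integral_exp_indicator_le)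
  also have "\<dots> = ennreal (exp ((exp \<theta> - 1) * (\<Sum>x\<in>I. measure_pmf.prob (M x) (A x))))"
    using I by (simp add: prod_ennreal sum_distrib_left exp_sum)
  finally show ?thesis .
qed

lemma exp_minus_one_minus_self_nonneg: "0 \<le> exp x - 1 - x" for x :: real
  using exp_ge_add_one_self[of x] by linarith

lemma exp_diff_nat_le:
  fixes \<theta> :: real and n k :: nat
  shows "exp (\<theta> * real (n - k)) * exp ((exp \<theta> - 1) * k)
     \<le> exp ((exp \<theta> - 1 - \<theta>) * k) * (exp (\<theta> * n) + exp (\<theta> * k))"
proof (cases "k \<le> n")
  case True
  then have "exp (\<theta> * real (n - k)) * exp ((exp \<theta> - 1) * k) = exp ((exp \<theta> - 1 - \<theta>) * k) * exp (\<theta> * n)"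
    by (simp add: of_nat_diff flip: exp_add) (simp add: algebra_simps)
  then show ?thesis
    by (simp add: distrib_left)
next
  case False
  then have "exp (\<theta> * real (n - k)) * exp ((exp \<theta> - 1) * k) = exp ((exp \<theta> - 1 - \<theta>) * k) * exp (\<theta> * k)"
    by (simp flip: exp_add) (simp add: algebra_simps)
  then show ?thesis
    by (simp add: distrib_left)
qed

section \<open>Markov chains with a failure flag\<close>

fun chain_pmf :: "'a pmf \<Rightarrow> ('a \<Rightarrow> 'a pmf) \<Rightarrow> nat \<Rightarrow> 'a pmf" where
  "chain_pmf p K 0 = p"
| "chain_pmf p K (Suc t) = bind_pmf (chain_pmf p K t) K"

text \<open>The flag records whether the chain has entered \<open>Bad\<close> at some time in \<open>{1..t}\<close>.\<close>

definition flag_step :: "('a \<Rightarrow> 'a pmf) \<Rightarrow> 'a set \<Rightarrow> 'a \<times> bool \<Rightarrow> ('a \<times> bool) pmf" where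
  "flag_step K Bad z = map_pmf (\<lambda>y. (y, snd z \<or> y \<in> Bad)) (K (fst z))"

definition flagged_chain :: "'a pmf \<Rightarrow> ('a \<Rightarrow> 'a pmf) \<Rightarrow> 'a set \<Rightarrow> nat \<Rightarrow> ('a \<times> bool) pmf" where
  "flagged_chain p K Bad = chain_pmf (map_pmf (\<lambda>x. (x, False)) p) (flag_step K Bad)"

lemma map_fst_flagged_chain: "map_pmf fst (flagged_chain p K Bad t) = chain_pmf p K t"
proof (induction t)
  case (Suc t)
  have "map_pmf fst (flagged_chain p K Bad (Suc t))
      = bind_pmf (flagged_chain p K Bad t) (\<lambda>z. K (fst z))"
    by (simp add: flagged_chain_def flag_step_def map_bind_pmf pmf.map_comp o_def)
  also have "\<dots> = chain_pmf p K (Suc t)"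
    by (simp add: bind_map_pmf flip: Suc.IH)
  finally show ?case .
qed (simp add: flagged_chain_def pmf.map_comp o_def)

lemma prob_flagged_chain_le:
  "measure_pmf.prob (flagged_chain p K Bad t) {z. snd z}
     \<le> (\<Sum>s\<in>{1..t}. measure_pmf.prob (chain_pmf p K s) Bad)"
proof (induction t)
  case 0
  show ?case
    by (simp add: flagged_chain_def measure_pmf_single)
next
  case (Suc t)
  let ?F = "flagged_chain p K Bad t"
  have "emeasure (flagged_chain p K Bad (Suc t)) {z. snd z}
      = (\<integral>\<^sup>+z. emeasure (flag_step K Bad z) {z. snd z} \<partial>?F)"
    by (simp add: flagged_chain_def emeasure_bind_pmf)
  also have "\<dots> \<le> (\<integral>\<^sup>+z. indicator {z. snd z} z + emeasure (K (fst z)) Bad \<partial>?F)"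
  proof (rule nn_integral_mono)
    fix z :: "'a \<times> bool"
    show "emeasure (flag_step K Bad z) {z. snd z} \<le> indicator {z. snd z} z + emeasure (K (fst z)) Bad"
      using measure_pmf.emeasure_le_1[of "flag_step K Bad z" "{z. snd z}"]
      by (cases "snd z") (auto simp: flag_step_def vimage_def add_increasing2)
  qed
  also have "\<dots> = emeasure ?F {z. snd z} + (\<integral>\<^sup>+z. emeasure (K (fst z)) Bad \<partial>?F)"
    by (subst nn_integral_add) auto
  also have "(\<integral>\<^sup>+z. emeasure (K (fst z)) Bad \<partial>?F) = emeasure (bind_pmf (map_pmf fst ?F) K) Bad"
    by (simp add: bind_map_pmf)
  also have "\<dots> = emeasure (chain_pmf p K (Suc t)) Bad"
    by (simp only: map_fst_flagged_chain chain_pmf.simps)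
  finally have "measure_pmf.prob (flagged_chain p K Bad (Suc t)) {z. snd z}
      \<le> measure_pmf.prob ?F {z. snd z} + measure_pmf.prob (chain_pmf p K (Suc t)) Bad"
    by (simp add: measure_pmf.emeasure_eq_measure flip: ennreal_plus)
  then show ?case
    using Suc by simp
qed

lemma flagged_chain_invariant:
  assumes init: "\<And>x. x \<in> set_pmf p \<Longrightarrow> I 0 x"
    and step: "\<And>s x y. I s x \<Longrightarrow> y \<in> set_pmf (K x) \<Longrightarrow> y \<notin> Bad \<Longrightarrow> I (Suc s) y"
  shows "z \<in> set_pmf (flagged_chain p K Bad t) \<Longrightarrow> \<not> snd z \<Longrightarrow> I t (fst z)"
proof (induction t arbitrary: z)
  case 0
  then show ?case
    using init by (auto simp: flagged_chain_def)
next
  case (Suc t)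
  then obtain z' where "z' \<in> set_pmf (flagged_chain p K Bad t)" "\<not> snd z'"
    "fst z \<in> set_pmf (K (fst z'))" "fst z \<notin> Bad"
    by (auto simp: flagged_chain_def flag_step_def)
  then show ?case
    using Suc.IH step by blast
qed

text \<open>A union bound along trajectories, although only the marginals of the chain are available.\<close>

lemma chain_pmf_prob_ge:
  assumes init: "\<And>x. x \<in> set_pmf p \<Longrightarrow> I 0 x"
    and step: "\<And>s x y. I s x \<Longrightarrow> y \<in> set_pmf (K x) \<Longrightarrow> y \<notin> Bad \<Longrightarrow> I (Suc s) y"
    and good: "\<And>x. I t x \<Longrightarrow> x \<in> Good"
  shows "1 - (\<Sum>s\<in>{1..t}. measure_pmf.prob (chain_pmf p K s) Bad)
           \<le> measure_pmf.prob (chain_pmf p K t) Good"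
proof -
  let ?F = "flagged_chain p K Bad t"
  have "1 - (\<Sum>s\<in>{1..t}. measure_pmf.prob (chain_pmf p K s) Bad) \<le> 1 - measure_pmf.prob ?F {z. snd z}"
    using prob_flagged_chain_le[of p K Bad t] by linarith
  also have "\<dots> = measure_pmf.prob ?F (space ?F - {z. snd z})"
    by (subst measure_pmf.prob_compl) auto
  also have "\<dots> \<le> measure_pmf.prob ?F (fst -` Good)"
  proof (intro measure_pmf.finite_measure_mono_AE AE_pmfI impI)
    fix z assume "z \<in> set_pmf ?F" "z \<in> space ?F - {z. snd z}"
    then show "z \<in> fst -` Good"
      using flagged_chain_invariant[of p I K Bad, OF init step] good by auto
  qed simp
  also have "\<dots> = measure_pmf.prob (chain_pmf p K t) Good"
    by (simp add: measure_map_pmf flip: map_fst_flagged_chain[of p K Bad t])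
  finally show ?thesis .
qed

section \<open>Queue lengths\<close>

lemma dissem_eq_chain_pmf:
  "dissem N E k L t = chain_pmf (return_pmf (dissem_init N k L)) (dissem_step N E k) t"
  by (induction t) simp_all

lemma list_comprehension_eq_map_filter: "[f j. j \<leftarrow> xs, P j] = map f (filter P xs)"
  by (induction xs) auto

lemma popped_idx_eq_Sigma: "popped_idx N k Q = Sigma (agents N) (\<lambda>i. {..<length (take k (Q i))})"
  by (auto simp: popped_idx_def)

lemma finite_popped_idx [simp]: "finite (popped_idx N k Q)"
  by (simp add: popped_idx_eq_Sigma)

lemma length_filter_upt: "length (filter P [0..<n]) = card {j. j < n \<and> P j}"
  by (simp add: length_filter_conv_card cong: conj_cong)

lemma length_dissem_update:
  assumes "v \<in> agents N"
  shows "length (dissem_update N k Q d v)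
           = (length (Q v) - k) + card {x\<in>popped_idx N k Q. d x = v \<and> 1 < take k (Q (fst x)) ! snd x}"
proof -
  let ?S = "\<lambda>i. {j. j < length (take k (Q i)) \<and> d (i, j) = v \<and> 1 < take k (Q i) ! j}"
  have "length [take k (Q i) ! j - 1. j \<leftarrow> [0..<length (take k (Q i))],
                 d (i, j) = v \<and> 1 < take k (Q i) ! j] = card (?S i)" for i
    by (simp only: list_comprehension_eq_map_filter length_map length_filter_upt)
  then have "length (concat (map (\<lambda>i. [take k (Q i) ! j - 1. j \<leftarrow> [0..<length (take k (Q i))],
                                d (i, j) = v \<and> 1 < take k (Q i) ! j]) [1..<Suc N]))
      = (\<Sum>i\<leftarrow>[1..<Suc N]. card (?S i))"
    by (simp only: length_concat map_map o_def)
  also have "\<dots> = (\<Sum>i\<in>agents N. card (?S i))"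
    by (simp only: agents_def set_upt atLeastLessThanSuc_atLeastAtMost
        flip: sum_set_upt_conv_sum_list_nat)
  also have "\<dots> = card (Sigma (agents N) ?S)"
    by (simp add: card_SigmaI)
  also have "Sigma (agents N) ?S = {x\<in>popped_idx N k Q. d x = v \<and> 1 < take k (Q (fst x)) ! snd x}"
    by (auto simp: popped_idx_def)
  finally show ?thesis
    using assms by (simp add: dissem_update_def)
qed

lemma sum_popped_Psi_le:
  assumes "simple_graph N E" "v \<in> agents N"
  shows "(\<Sum>x\<in>popped_idx N k Q. Psi N E (fst x) v) \<le> k"
proof -
  have "(\<Sum>x\<in>popped_idx N k Q. Psi N E (fst x) v)
      = (\<Sum>i\<in>agents N. \<Sum>j<length (take k (Q i)). Psi N E i v)"
    unfolding popped_idx_eq_Sigma by (subst sum.Sigma) (auto simp: split_def)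
  also have "\<dots> = (\<Sum>i\<in>agents N. length (take k (Q i)) * Psi N E i v)"
    by simp
  also have "\<dots> \<le> (\<Sum>i\<in>agents N. k * Psi N E i v)"
    by (intro sum_mono mult_right_mono) (auto simp: Psi_nonneg)
  also have "\<dots> = k"
    using sum_Psi_column[OF assms] by (simp flip: sum_distrib_left)
  finally show ?thesis .
qed

lemma sum_popped_prob_le:
  assumes G: "simple_graph N E" and v: "v \<in> agents N" and A: "\<And>x. A x \<subseteq> {v}"
  shows "(\<Sum>x\<in>popped_idx N k Q. measure_pmf.prob (mhrw_step N E (fst x)) (A x)) \<le> k"
proof -
  have "measure_pmf.prob (mhrw_step N E (fst x)) (A x) \<le> Psi N E (fst x) v" if "x \<in> popped_idx N k Q" for x
  proof -
    have "fst x \<in> agents N"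
      using that by (auto simp: popped_idx_def)
    moreover have "A x = {v} \<or> A x = {}"
      using A by blast
    ultimately show ?thesis
      by (auto simp: measure_pmf_single pmf_mhrw_step[OF G] Psi_nonneg)
  qed
  then have "(\<Sum>x\<in>popped_idx N k Q. measure_pmf.prob (mhrw_step N E (fst x)) (A x))
      \<le> (\<Sum>x\<in>popped_idx N k Q. Psi N E (fst x) v)"
    by (rule sum_mono)
  also have "\<dots> \<le> k"
    using sum_popped_Psi_le[OF G v] .
  finally show ?thesis .
qed

lemma nn_integral_exp_length_dissem_step_le:
  fixes \<theta> :: real
  assumes G: "simple_graph N E" and v: "v \<in> agents N" and \<theta>: "0 \<le> \<theta>"
  shows "(\<integral>\<^sup>+Q'. ennreal (exp (\<theta> * length (Q' v))) \<partial>measure_pmf (dissem_step N E k Q))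
           \<le> ennreal (exp (\<theta> * real (length (Q v) - k)) * exp ((exp \<theta> - 1) * k))"
proof -
  let ?P = "popped_idx N k Q"
  let ?M = "\<lambda>(i, j). mhrw_step N E i"
  define A where "A x = {y. y = v \<and> 1 < take k (Q (fst x)) ! snd x}" for x
  have "real (length (dissem_update N k Q d v)) = real (length (Q v) - k) + card {x\<in>?P. d x \<in> A x}" for d
    using length_dissem_update[OF v] by (simp add: A_def)
  then have "(\<integral>\<^sup>+Q'. ennreal (exp (\<theta> * length (Q' v))) \<partial>measure_pmf (dissem_step N E k Q))
      = (\<integral>\<^sup>+d. ennreal (exp (\<theta> * real (length (Q v) - k))) * ennreal (exp (\<theta> * card {x\<in>?P. d x \<in> A x}))
           \<partial>measure_pmf (Pi_pmf ?P 0 ?M))"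
    by (simp add: dissem_step_def distrib_left exp_add ennreal_mult)
  also have "\<dots> = ennreal (exp (\<theta> * real (length (Q v) - k)))
      * (\<integral>\<^sup>+d. ennreal (exp (\<theta> * card {x\<in>?P. d x \<in> A x})) \<partial>measure_pmf (Pi_pmf ?P 0 ?M))"
    by (simp add: nn_integral_cmult)
  also have "\<dots> \<le> ennreal (exp (\<theta> * real (length (Q v) - k)))
      * ennreal (exp ((exp \<theta> - 1) * (\<Sum>x\<in>?P. measure_pmf.prob (?M x) (A x))))"
    using \<theta> by (intro mult_left_mono nn_integral_exp_card_Pi_pmf_le) simp_all
  also have "\<dots> \<le> ennreal (exp (\<theta> * real (length (Q v) - k)) * exp ((exp \<theta> - 1) * k))"
  proof -
    have "(\<Sum>x\<in>?P. measure_pmf.prob (?M x) (A x)) \<le> k"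
      using sum_popped_prob_le[OF G v, of A] by (auto simp: A_def split_def)
    then show ?thesis
      using \<theta> by (auto simp flip: ennreal_mult intro!: ennreal_leI mult_left_mono)
  qed
  finally show ?thesis .
qed

lemma length_dissem_init_le: "length (dissem_init N k L v) \<le> k"
  by (auto simp: dissem_init_def intro: order.trans[OF length_filter_le])

lemma nn_integral_exp_length_dissem_le:
  fixes \<theta> :: real and k :: nat
  assumes G: "simple_graph N E" and v: "v \<in> agents N" and \<theta>: "0 \<le> \<theta>"
  defines "\<rho> \<equiv> exp ((exp \<theta> - 1 - \<theta>) * k)"
  shows "(\<integral>\<^sup>+Q. ennreal (exp (\<theta> * length (Q v))) \<partial>measure_pmf (dissem N E k L t))
           \<le> ennreal ((real t + 1) * \<rho> ^ t * exp (\<theta> * k))"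
proof (induction t)
  case 0
  show ?case
    using length_dissem_init_le[of N k L v] \<theta> by (simp add: mult_left_mono)
next
  case (Suc t)
  let ?X = "\<lambda>Q. ennreal (exp (\<theta> * length (Q v)))"
  have \<rho>_nonneg: "0 \<le> \<rho>"
    by (simp add: \<rho>_def)
  have "(\<integral>\<^sup>+Q. ?X Q \<partial>measure_pmf (dissem N E k L (Suc t)))
      = (\<integral>\<^sup>+Q. (\<integral>\<^sup>+Q'. ?X Q' \<partial>measure_pmf (dissem_step N E k Q)) \<partial>measure_pmf (dissem N E k L t))"
    by (simp add: nn_integral_bind_pmf)
  also have "\<dots> \<le> (\<integral>\<^sup>+Q. ennreal \<rho> * ?X Q + ennreal (\<rho> * exp (\<theta> * k)) \<partial>measure_pmf (dissem N E k L t))"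
  proof (rule nn_integral_mono)
    fix Q
    have "(\<integral>\<^sup>+Q'. ?X Q' \<partial>measure_pmf (dissem_step N E k Q))
        \<le> ennreal (exp (\<theta> * real (length (Q v) - k)) * exp ((exp \<theta> - 1) * k))"
      by (rule nn_integral_exp_length_dissem_step_le[OF G v \<theta>])
    also have "\<dots> \<le> ennreal (\<rho> * (exp (\<theta> * length (Q v)) + exp (\<theta> * k)))"
      unfolding \<rho>_def by (intro ennreal_leI exp_diff_nat_le)
    also have "\<dots> = ennreal \<rho> * ?X Q + ennreal (\<rho> * exp (\<theta> * k))"
      using \<rho>_nonneg by (simp add: distrib_left ennreal_mult)
    finally show "(\<integral>\<^sup>+Q'. ?X Q' \<partial>measure_pmf (dissem_step N E k Q))
        \<le> ennreal \<rho> * ?X Q + ennreal (\<rho> * exp (\<theta> * k))" .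
  qed
  also have "\<dots> = ennreal \<rho> * (\<integral>\<^sup>+Q. ?X Q \<partial>measure_pmf (dissem N E k L t)) + ennreal (\<rho> * exp (\<theta> * k))"
    by (simp add: nn_integral_add nn_integral_cmult)
  also have "\<dots> \<le> ennreal \<rho> * ennreal ((real t + 1) * \<rho> ^ t * exp (\<theta> * k)) + ennreal (\<rho> * exp (\<theta> * k))"
    using Suc by (intro add_right_mono mult_left_mono) (simp_all add: add.commute)
  also have "\<dots> = ennreal (\<rho> * ((real t + 1) * \<rho> ^ t * exp (\<theta> * k)) + \<rho> * exp (\<theta> * k))"
    using \<rho>_nonneg by (simp add: ennreal_mult)
  also have "\<rho> * ((real t + 1) * \<rho> ^ t * exp (\<theta> * k)) + \<rho> * exp (\<theta> * k) \<le> (real (Suc t) + 1) * \<rho> ^ Suc t * exp (\<theta> * k)"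
  proof -
    have "1 \<le> \<rho>"
      using exp_minus_one_minus_self_nonneg[of \<theta>] by (simp add: \<rho>_def)
    then have "\<rho> * exp (\<theta> * k) \<le> \<rho> ^ Suc t * exp (\<theta> * k)"
      by (simp add: mult_le_cancel_left1 one_le_power)
    then show ?thesis
      by (simp add: algebra_simps)
  qed
  finally show ?case
    by (simp add: ennreal_leI)
qed

lemma prob_dissem_length_gt_le:
  fixes \<theta> :: real
  assumes G: "simple_graph N E" and v: "v \<in> agents N" and \<theta>: "0 < \<theta>"
  shows "measure_pmf.prob (dissem N E k L t) {Q. b < length (Q v)}
           \<le> (real t + 1) * exp ((exp \<theta> - 1 - \<theta>) * k) ^ t * exp (\<theta> * k) / exp (\<theta> * (real b + 1))"
proof -
  let ?M = "measure_pmf (dissem N E k L t)"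
  define X where "X = (real t + 1) * exp ((exp \<theta> - 1 - \<theta>) * k) ^ t * exp (\<theta> * k)"
  have "emeasure ?M {Q. b < length (Q v)} = emeasure ?M {Q. real b + 1 \<le> real (length (Q v))}"
    by (intro arg_cong[where f = "emeasure ?M"]) auto
  also have "\<dots> \<le> ennreal (exp (- (\<theta> * (real b + 1)))) * (\<integral>\<^sup>+Q. ennreal (exp (\<theta> * length (Q v))) \<partial>?M)"
    using Chernoff_ineq_nn_integral_ge[OF \<theta>, of UNIV ?M "\<lambda>Q. real (length (Q v))" "real b + 1"]
    by simp
  also have "\<dots> \<le> ennreal (exp (- (\<theta> * (real b + 1)))) * ennreal X"
    unfolding X_def using nn_integral_exp_length_dissem_le[OF G v less_imp_le[OF \<theta>]]
    by (intro mult_left_mono) simp_all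
  also have "\<dots> = ennreal (exp (- (\<theta> * (real b + 1))) * X)"
    by (simp add: X_def ennreal_mult)
  finally have "measure_pmf.prob (dissem N E k L t) {Q. b < length (Q v)} \<le> exp (- (\<theta> * (real b + 1))) * X"
    by (simp add: measure_pmf.emeasure_eq_measure X_def)
  also have "exp (- (\<theta> * (real b + 1))) * X = X / exp (\<theta> * (real b + 1))"
    by (simp add: exp_minus divide_inverse mult.commute)
  finally show ?thesis
    unfolding X_def .
qed

lemma prob_dissem_overflow_le:
  fixes \<theta> :: real
  assumes G: "simple_graph N E" and \<theta>: "0 < \<theta>"
  shows "measure_pmf.prob (dissem N E k L t) {Q. \<exists>v\<in>agents N. b < length (Q v)}
           \<le> N * ((real t + 1) * exp ((exp \<theta> - 1 - \<theta>) * k) ^ t * exp (\<theta> * k) / exp (\<theta> * (real b + 1)))"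
proof -
  have overflow_eq: "{Q. \<exists>v\<in>agents N. b < length (Q v)} = (\<Union>v\<in>agents N. {Q. b < length (Q v)})"
    by auto
  have "measure_pmf.prob (dissem N E k L t) {Q. \<exists>v\<in>agents N. b < length (Q v)}
      \<le> (\<Sum>v\<in>agents N. measure_pmf.prob (dissem N E k L t) {Q. b < length (Q v)})"
    unfolding overflow_eq by (rule measure_pmf.finite_measure_subadditive_finite) auto
  also have "\<dots> \<le> (\<Sum>v\<in>agents N. (real t + 1) * exp ((exp \<theta> - 1 - \<theta>) * k) ^ t * exp (\<theta> * k) / exp (\<theta> * (real b + 1)))"
    using prob_dissem_length_gt_le[OF G _ \<theta>] by (intro sum_mono) simp
  finally show ?thesis
    by (simp add: agents_def)
qed

section \<open>Draining the queues\<close>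

text \<open>A token at position \<open>p\<close> of its queue with \<open>r\<close> hops left is popped within \<open>p div k + 1\<close>
  slots; if no queue ever holds more than \<open>B * k\<close> tokens, each of its remaining \<open>r - 1\<close> hops
  then takes at most \<open>B\<close> slots. So \<open>queue_budget N k B m Q\<close> says that \<open>m\<close> more slots
  suffice for all tokens.\<close>

definition queue_budget :: "nat \<Rightarrow> nat \<Rightarrow> nat \<Rightarrow> nat \<Rightarrow> dstate \<Rightarrow> bool" where
  "queue_budget N k B m Q \<longleftrightarrow>
     (\<forall>v\<in>agents N. \<forall>p<length (Q v). p div k + 1 + B * (Q v ! p - 1) \<le> m)"

lemma queue_budget_mono: "queue_budget N k B m Q \<Longrightarrow> m \<le> m' \<Longrightarrow> queue_budget N k B m' Q"
  unfolding queue_budget_def by force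

lemma queue_budget_0_imp_all_walks_done: "queue_budget N k B 0 Q \<Longrightarrow> Q \<in> all_walks_done N"
  by (fastforce simp: queue_budget_def all_walks_done_def)

lemma queue_budget_dissem_init:
  assumes "1 \<le> B"
  shows "queue_budget N k B (B * L) (dissem_init N k L)"
proof -
  have "1 + B * (L - 1) \<le> B * L" if "0 < L"
    using assms that by (cases L) simp_all
  then show ?thesis
    by (auto simp: queue_budget_def dissem_init_def filter_replicate)
qed

lemma nth_dissem_update_cases:
  assumes v: "v \<in> agents N" and p: "p < length (dissem_update N k Q d v)"
  obtains (waiting) "p < length (Q v) - k" "dissem_update N k Q d v ! p = Q v ! (k + p)"
  | (received) i j where "i \<in> agents N" "j < length (Q i)" "j < k" "1 < Q i ! j"
      "dissem_update N k Q d v ! p = Q i ! j - 1"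
proof -
  define R where "R = concat (map (\<lambda>i. [take k (Q i) ! j - 1. j \<leftarrow> [0..<length (take k (Q i))],
                                d (i, j) = v \<and> 1 < take k (Q i) ! j]) [1..<Suc N])"
  have update: "dissem_update N k Q d v = drop k (Q v) @ R"
    using v by (simp add: dissem_update_def R_def)
  show thesis
  proof (cases "p < length (Q v) - k")
    case True
    then show thesis
      using waiting by (simp add: update nth_append)
  next
    case False
    then have "dissem_update N k Q d v ! p \<in> set R"
      using p by (simp add: update nth_append)
    then show thesis
      using received by (fastforce simp: R_def list_comprehension_eq_map_filter agents_def)
  qed
qed

lemma queue_budget_dissem_update:
  assumes k: "0 < k" and budget: "queue_budget N k B (Suc m) Q"
    and short: "\<forall>v\<in>agents N. length (dissem_update N k Q d v) \<le> B * k"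
  shows "queue_budget N k B m (dissem_update N k Q d)"
  unfolding queue_budget_def
proof (intro ballI allI impI)
  fix v p
  assume v: "v \<in> agents N" and p: "p < length (dissem_update N k Q d v)"
  from v p show "p div k + 1 + B * (dissem_update N k Q d v ! p - 1) \<le> m"
  proof (cases rule: nth_dissem_update_cases)
    case waiting
    then have "(k + p) div k + 1 + B * (Q v ! (k + p) - 1) \<le> Suc m"
      using budget v unfolding queue_budget_def by auto
    moreover have "(k + p) div k = Suc (p div k)"
      using k by simp
    ultimately show ?thesis
      using waiting by simp
  next
    case (received i j)
    have "p < B * k"
      using p short v by fastforce
    then have "p div k + 1 \<le> B"
      using k by (simp add: less_mult_imp_div_less Suc_leI)
    moreover have "B * (Q i ! j - 1) \<le> m"
    proof -
      have "j div k + 1 + B * (Q i ! j - 1) \<le> Suc m"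
        using budget received unfolding queue_budget_def by blast
      then show ?thesis
        using received by simp
    qed
    moreover have "B * (Q i ! j - 1) = B + B * (Q i ! j - 1 - 1)"
      using received by (cases "Q i ! j") (simp_all add: mult_Suc_right[symmetric])
    ultimately show ?thesis
      using received by simp
  qed
qed

definition overflow_bound :: "nat \<Rightarrow> nat \<Rightarrow> nat \<Rightarrow> nat \<Rightarrow> real \<Rightarrow> real" where
  "overflow_bound N k B T \<theta> =
     T * N * ((real T + 1) * exp ((exp \<theta> - 1 - \<theta>) * k) ^ T * exp (\<theta> * k) / exp (\<theta> * (real (B * k) + 1)))"

lemma sum_prob_dissem_overflow_le:
  fixes \<theta> :: real
  assumes G: "simple_graph N E" and \<theta>: "0 < \<theta>"
  shows "(\<Sum>s\<in>{1..T}. measure_pmf.prob (dissem N E k L s) {Q. \<exists>v\<in>agents N. B * k < length (Q v)})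
           \<le> overflow_bound N k B T \<theta>"
proof -
  let ?\<rho> = "exp ((exp \<theta> - 1 - \<theta>) * k)"
  define Y where "Y = N * ((real T + 1) * ?\<rho> ^ T * exp (\<theta> * k) / exp (\<theta> * (real (B * k) + 1)))"
  have "measure_pmf.prob (dissem N E k L s) {Q. \<exists>v\<in>agents N. B * k < length (Q v)} \<le> Y"
    if "s \<le> T" for s
  proof -
    have "1 \<le> ?\<rho>"
      using exp_minus_one_minus_self_nonneg[of \<theta>] by simp
    then have "(real s + 1) * ?\<rho> ^ s \<le> (real T + 1) * ?\<rho> ^ T"
      using that by (intro mult_mono power_increasing) auto
    then have "N * ((real s + 1) * ?\<rho> ^ s * exp (\<theta> * k) / exp (\<theta> * (real (B * k) + 1))) \<le> Y"
      unfolding Y_def by (intro mult_left_mono divide_right_mono mult_right_mono) auto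
    with prob_dissem_overflow_le[OF G \<theta>] show ?thesis
      by (rule order.trans)
  qed
  then have "(\<Sum>s\<in>{1..T}. measure_pmf.prob (dissem N E k L s) {Q. \<exists>v\<in>agents N. B * k < length (Q v)})
      \<le> (\<Sum>s\<in>{1..T}. Y)"
    by (intro sum_mono) simp
  also have "\<dots> = overflow_bound N k B T \<theta>"
    by (simp add: Y_def overflow_bound_def)
  finally show ?thesis .
qed

lemma prob_all_walks_done_ge:
  fixes \<theta> :: real
  assumes G: "simple_graph N E" and k: "0 < k" and B: "1 \<le> B" and T: "B * L \<le> T" and \<theta>: "0 < \<theta>"
  shows "1 - overflow_bound N k B T \<theta> \<le> measure_pmf.prob (dissem N E k L T) (all_walks_done N)"
proof -
  let ?Bad = "{Q. \<exists>v\<in>agents N. B * k < length (Q v)}"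
  have "1 - (\<Sum>s\<in>{1..T}. measure_pmf.prob (dissem N E k L s) ?Bad)
      \<le> measure_pmf.prob (dissem N E k L T) (all_walks_done N)"
    unfolding dissem_eq_chain_pmf
  proof (rule chain_pmf_prob_ge[where I = "\<lambda>s. queue_budget N k B (B * L - s)"])
    fix s x y
    assume x: "queue_budget N k B (B * L - s) x" and y: "y \<in> set_pmf (dissem_step N E k x)" "y \<notin> ?Bad"
    from y(1) obtain d where "y = dissem_update N k x d"
      by (auto simp: dissem_step_def)
    moreover have "queue_budget N k B (Suc (B * L - Suc s)) x"
      using x by (rule queue_budget_mono) simp
    ultimately show "queue_budget N k B (B * L - Suc s) y"
      using queue_budget_dissem_update[OF k] y(2) by (auto simp: not_less)
  qed (use queue_budget_dissem_init[OF B] T queue_budget_0_imp_all_walks_done in auto)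
  with sum_prob_dissem_overflow_le[OF G \<theta>, of k L B T] show ?thesis
    by linarith
qed

section \<open>Choice of the parameters\<close>

lemma ln_ge_half:
  assumes "2 \<le> N"
  shows "1/2 \<le> ln (real N)"
proof -
  have "ln 2 \<le> ln (real N)"
    using assms by simp
  then show ?thesis
    using ln2_ge_two_thirds by linarith
qed

lemma walk_slots_le:
  fixes c a l M T \<theta> :: real and B L :: nat
  assumes c: "0 < c" and a: "a = 4 * c + 4" and l: "1/2 \<le> l" and M: "1 \<le> M"
    and T: "a^2 * M * l^2 \<le> T" and \<theta>: "\<theta> = 1 / (a * l)" and B: "B \<le> 2 * \<theta> * T + 2"
    and L: "L \<le> c * l"
  shows "B * L \<le> T"
proof -
  have "a^2 * l^2 * 1 \<le> a^2 * l^2 * M"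
    using M by (intro mult_left_mono) auto
  with T have T: "a^2 * l^2 \<le> T"
    by (simp add: mult_ac)
  have al: "2 \<le> a * l"
    using a c l mult_mono[of 4 a "1/2" l] by simp
  then have nonzero: "a \<noteq> 0" "l \<noteq> 0"
    by auto
  have "real B * real L \<le> (2 * \<theta> * T + 2) * (c * l)"
    using B L by (intro mult_mono) (auto intro: order_trans[OF of_nat_0_le_iff B])
  also have "\<dots> = (2 * c / a) * T + 2 * c * l"
    using nonzero by (simp add: \<theta> field_simps)
  also have "\<dots> \<le> T / 2 + T / 2"
  proof (rule add_mono)
    have "2 * c / a \<le> 1/2"
      using a c by (simp add: divide_le_eq)
    moreover have "0 \<le> T"
      using T by (metis order_trans zero_le_mult_iff zero_le_power2)
    ultimately show "(2 * c / a) * T \<le> T / 2"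
      using mult_right_mono[of "2 * c / a" "1/2" T] by simp
    have "2 * (a * l) \<le> (a * l) * (a * l)"
      using al by (intro mult_right_mono) auto
    then have "2 * (a * l) \<le> T"
      using T by (simp add: power2_eq_square mult_ac)
    moreover have "4 * c * l \<le> 2 * (a * l)"
      using a c l by (simp add: algebra_simps)
    ultimately show "2 * c * l \<le> T / 2"
      by linarith
  qed
  finally show ?thesis
    by simp
qed

lemma overflow_bound_le:
  fixes \<theta> :: real
  assumes \<theta>: "0 < \<theta>" "\<theta> \<le> 1" and B: "2 * \<theta> * T \<le> real B - 1"
  shows "overflow_bound N k B T \<theta> \<le> N * (real T + 1)^2 * exp (- (\<theta>^2 * k * T))"
proof -
  have "exp ((exp \<theta> - 1 - \<theta>) * k) ^ T = exp (T * ((exp \<theta> - 1 - \<theta>) * k))"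
    by (simp flip: exp_of_nat_mult)
  also have "\<dots> \<le> exp (\<theta>^2 * k * T)"
  proof -
    have "(exp \<theta> - 1 - \<theta>) * (k * T) \<le> \<theta>^2 * (k * T)"
      using exp_bound[of \<theta>] \<theta> by (intro mult_right_mono) auto
    then show ?thesis
      by (simp add: mult_ac)
  qed
  finally have growth: "exp ((exp \<theta> - 1 - \<theta>) * k) ^ T \<le> exp (\<theta>^2 * k * T)" .
  have "exp (\<theta> * k) / exp (\<theta> * (real (B * k) + 1)) \<le> exp (- (\<theta> * k * (real B - 1)))"
    using \<theta> by (simp add: algebra_simps flip: exp_diff)
  also have "\<dots> \<le> exp (- (2 * (\<theta>^2 * k * T)))"
    using mult_left_mono[OF B, of "\<theta> * k"] \<theta> by (simp add: power2_eq_square algebra_simps)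
  finally have decay: "exp (\<theta> * k) / exp (\<theta> * (real (B * k) + 1)) \<le> exp (- (2 * (\<theta>^2 * k * T)))" .
  have "overflow_bound N k B T \<theta>
      = T * N * (real T + 1) * (exp ((exp \<theta> - 1 - \<theta>) * k) ^ T * (exp (\<theta> * k) / exp (\<theta> * (real (B * k) + 1))))"
    by (simp add: overflow_bound_def)
  also have "\<dots> \<le> (real T + 1) * N * (real T + 1) * (exp (\<theta>^2 * k * T) * exp (- (2 * (\<theta>^2 * k * T))))"
    using growth decay by (intro mult_mono) (auto intro: mult_right_mono)
  also have "\<dots> = N * (real T + 1)^2 * exp (- (\<theta>^2 * k * T))"
    by (simp add: power2_eq_square algebra_simps flip: exp_add)
  finally show ?thesis .
qed

lemma polylog_exp_le_powr:
  fixes C K h :: real and N T :: nat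
  assumes N: "2 \<le> N" and C: "0 \<le> C" and T: "real T \<le> C * (ln N)^2 + 1"
    and K: "4 * ln (C + 2) \<le> K - 5 - h / 3"
  shows "N * (real T + 1)^2 * exp (- (K * ln N)) \<le> 1 / N powr (h / 3)"
proof -
  define l where "l = ln (real N)"
  have l: "1/2 \<le> l"
    unfolding l_def using N by (rule ln_ge_half)
  have N_eq: "real N = exp l"
    using N by (simp add: l_def)
  have "real T + 1 \<le> (C + 2) * (l + 1)^2"
  proof -
    have "C * l^2 \<le> C * (l + 1)^2"
      using C l by (intro mult_left_mono power_mono) auto
    moreover have "2 \<le> 2 * (l + 1)^2"
      using l one_le_power[of "l + 1" 2] by simp
    ultimately show ?thesis
      using T by (simp add: l_def algebra_simps)
  qed
  also have "\<dots> \<le> (C + 2) * (real N)^2"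
  proof -
    have "l + 1 \<le> real N"
      using exp_ge_add_one_self[of l] N_eq by linarith
    then show ?thesis
      using C l by (intro mult_left_mono power_mono) auto
  qed
  finally have slots: "real T + 1 \<le> (C + 2) * (real N)^2" .
  have "N * (real T + 1)^2 * exp (- (K * l)) \<le> N * ((C + 2) * (real N)^2)^2 * exp (- (K * l))"
    using slots by (intro mult_right_mono mult_left_mono power_mono) auto
  also have "\<dots> = exp (ln (C + 2)) ^ 2 * exp l ^ 5 * exp (- (K * l))"
    using C by (simp add: N_eq power2_eq_square eval_nat_numeral mult_ac)
  also have "\<dots> = exp (2 * ln (C + 2) + 5 * l - K * l)"
    by (simp add: algebra_simps flip: exp_add exp_of_nat_mult)
  also have "\<dots> \<le> exp (- (h / 3 * l))"
  proof -
    have "0 \<le> K - 5 - h / 3"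
      using K C ln_ge_zero[of "C + 2"] by linarith
    then have "(K - 5 - h / 3) * (1/2) \<le> (K - 5 - h / 3) * l"
      using l by (intro mult_left_mono) auto
    then show ?thesis
      using K by (simp add: algebra_simps)
  qed
  also have "\<dots> = 1 / N powr (h / 3)"
    using N by (simp add: powr_def l_def exp_minus inverse_eq_divide)
  finally show ?thesis
    by (simp add: l_def)
qed

lemma ln_slot_constant_le:
  fixes h a :: real
  assumes h: "16 \<le> h"
  defines "M \<equiv> 4 * ln (a^2 + 2) + 5 + h"
  shows "4 * ln (a^2 * M + 2) \<le> h * M - 5 - h / 3"
proof -
  have M: "1 \<le> M"
    using h by (simp add: M_def add_nonneg_nonneg)
  have "0 < a^2 * M + 2"
    using M by (simp add: add_nonneg_pos)
  moreover have "a^2 * M + 2 \<le> (a^2 + 2) * M"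
    using M by (simp add: algebra_simps)
  ultimately have "ln (a^2 * M + 2) \<le> ln ((a^2 + 2) * M)"
    by simp
  also have "\<dots> = ln (a^2 + 2) + ln M"
    using M add_nonneg_pos[of "a^2" 2] by (intro ln_mult_pos) auto
  also have "ln M \<le> M - 1"
    using M by (intro ln_le_minus_one) simp
  finally have "ln (a^2 * M + 2) \<le> ln (a^2 + 2) + M - 1"
    by simp
  moreover have "16 * M \<le> h * M"
    using h M by (intro mult_right_mono) auto
  moreover have "0 \<le> ln (a^2 + 2)"
    by simp
  ultimately show ?thesis
    using h M_def[THEN meta_eq_to_obj_eq] by linarith
qed

lemma overflow_bound_le_powr:
  fixes h a M \<theta> :: real and N k B T :: nat
  assumes h: "16 \<le> h" and N: "2 \<le> N" and k: "h * ln N \<le> k" and a: "0 < a"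
    and M: "M = 4 * ln (a^2 + 2) + 5 + h"
    and T: "a^2 * M * (ln N)^2 \<le> T" "real T \<le> a^2 * M * (ln N)^2 + 1"
    and \<theta>: "\<theta> = 1 / (a * ln N)" "\<theta> \<le> 1" and B: "2 * \<theta> * T \<le> real B - 1"
  shows "overflow_bound N k B T \<theta> \<le> 1 / N powr (h / 3)"
proof -
  have l: "1/2 \<le> ln N"
    using N by (rule ln_ge_half)
  have M_pos: "0 \<le> M"
    using h by (simp add: M add_nonneg_nonneg)
  have "h * M * ln N = \<theta>^2 * (h * ln N) * (a^2 * M * (ln N)^2)"
    using a l by (simp add: \<theta> power2_eq_square field_simps)
  also have "\<dots> \<le> \<theta>^2 * k * T"
    using k T(1) h l M_pos by (intro mult_mono) auto
  finally have "N * (real T + 1)^2 * exp (- (\<theta>^2 * k * T)) \<le> N * (real T + 1)^2 * exp (- (h * M * ln N))"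
    by (intro mult_left_mono) auto
  moreover have "0 < \<theta>"
    using a l by (simp add: \<theta>)
  then have "overflow_bound N k B T \<theta> \<le> N * (real T + 1)^2 * exp (- (\<theta>^2 * k * T))"
    using \<theta>(2) B by (rule overflow_bound_le)
  moreover have "N * (real T + 1)^2 * exp (- (h * M * ln N)) \<le> 1 / N powr (h / 3)"
    using polylog_exp_le_powr[OF N _ T(2) ln_slot_constant_le[OF h, of a, folded M]] M_pos
    by (simp add: mult_ac)
  ultimately show ?thesis
    by linarith
qed

lemma dissem_parameters_exist:
  fixes h c :: real
  assumes h: "16 \<le> h" and c: "0 < c"
  obtains C where "0 < C"
    and "\<And>N k L :: nat. 2 \<le> N \<Longrightarrow> h * ln N \<le> real k \<Longrightarrow> real L \<le> c * ln N \<Longrightarrow>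
           \<exists>B \<theta>. 1 \<le> B \<and> B * L \<le> nat \<lceil>C * (ln N)^2\<rceil> \<and> 0 < \<theta> \<and>
             overflow_bound N k B (nat \<lceil>C * (ln N)^2\<rceil>) \<theta> \<le> 1 / N powr (h / 3)"
proof
  \<comment> \<open>\<open>a\<close> makes \<open>B * L \<le> T\<close>; \<open>M\<close> absorbs the polylogarithmic factor \<open>N (T + 1)^2\<close>.\<close>
  define a where "a = 4 * c + 4"
  define M where "M = 4 * ln (a^2 + 2) + 5 + h"
  have a: "4 \<le> a" and M: "1 \<le> M"
    using c h by (simp_all add: a_def M_def add_nonneg_nonneg)
  show "0 < a^2 * M"
    using a M by simp
  fix N k L :: nat
  assume N: "2 \<le> N" and k: "h * ln N \<le> real k" and L: "real L \<le> c * ln N"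
  define T where "T = nat \<lceil>a^2 * M * (ln N)^2\<rceil>"
  define \<theta> where "\<theta> = 1 / (a * ln N)"
  define B where "B = nat \<lceil>2 * \<theta> * T\<rceil> + 1"
  have l: "1/2 \<le> ln N"
    using N by (rule ln_ge_half)
  then have "2 \<le> a * ln N"
    using a mult_mono[of 4 a "1/2" "ln N"] by simp
  then have \<theta>: "0 < \<theta>" "\<theta> \<le> 1"
    by (simp_all add: \<theta>_def)
  have "0 \<le> a^2 * M * (ln N)^2"
    using M by simp
  then have T: "a^2 * M * (ln N)^2 \<le> T" "real T \<le> a^2 * M * (ln N)^2 + 1"
    unfolding T_def by linarith+
  have "0 \<le> 2 * \<theta> * T"
    using \<theta> by simp
  then have B: "2 * \<theta> * T \<le> real B - 1" "real B \<le> 2 * \<theta> * T + 2"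
    unfolding B_def by linarith+
  have "B * L \<le> T"
    using walk_slots_le[OF c a_def l M T(1) \<theta>_def B(2) L] by (simp flip: of_nat_mult)
  moreover have "overflow_bound N k B T \<theta> \<le> 1 / N powr (h / 3)"
    using a by (intro overflow_bound_le_powr[OF h N k _ M_def T \<theta>_def \<theta>(2) B(1)]) simp
  ultimately show "\<exists>B \<theta>. 1 \<le> B \<and> B * L \<le> nat \<lceil>a^2 * M * (ln N)^2\<rceil> \<and> 0 < \<theta> \<and>
      overflow_bound N k B (nat \<lceil>a^2 * M * (ln N)^2\<rceil>) \<theta> \<le> 1 / N powr (h / 3)"
    using \<theta> by (auto simp: B_def T_def)
qed

lemma dissem_completes_whp:
  fixes h c :: real
  assumes h: "16 \<le> h" and c: "0 < c"
  obtains C where "0 < C"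
    and "\<And>N E k L. simple_graph N E \<Longrightarrow> 2 \<le> N \<Longrightarrow> h * ln N \<le> real k \<Longrightarrow> real L \<le> c * ln N \<Longrightarrow>
           1 - 1 / N powr (h / 3) \<le> measure_pmf.prob (dissem N E k L (nat \<lceil>C * (ln N)^2\<rceil>)) (all_walks_done N)"
proof -
  obtain C where C: "0 < C" and parameters: "\<And>N k L :: nat. 2 \<le> N \<Longrightarrow> h * ln N \<le> real k \<Longrightarrow>
      real L \<le> c * ln N \<Longrightarrow> \<exists>B \<theta>. 1 \<le> B \<and> B * L \<le> nat \<lceil>C * (ln N)^2\<rceil> \<and> 0 < \<theta> \<and>
        overflow_bound N k B (nat \<lceil>C * (ln N)^2\<rceil>) \<theta> \<le> 1 / N powr (h / 3)"
    using dissem_parameters_exist[OF h c] by blast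
  show thesis
  proof (rule that[OF C])
    fix N E k L
    assume G: "simple_graph N E" and N: "2 \<le> N" and k: "h * ln N \<le> real k" and L: "real L \<le> c * ln N"
    have "0 < h * ln N"
      using h ln_ge_half[OF N] by simp
    with k have "0 < k"
      by linarith
    obtain B \<theta> where "1 \<le> B" "B * L \<le> nat \<lceil>C * (ln N)^2\<rceil>" "0 < \<theta>"
      and overflow: "overflow_bound N k B (nat \<lceil>C * (ln N)^2\<rceil>) \<theta> \<le> 1 / N powr (h / 3)"
      using parameters[OF N k L] by blast
    then have "1 - overflow_bound N k B (nat \<lceil>C * (ln N)^2\<rceil>) \<theta>
        \<le> measure_pmf.prob (dissem N E k L (nat \<lceil>C * (ln N)^2\<rceil>)) (all_walks_done N)"
      using prob_all_walks_done_ge[OF G \<open>0 < k\<close>] by blast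
    with overflow show "1 - 1 / N powr (h / 3)
        \<le> measure_pmf.prob (dissem N E k L (nat \<lceil>C * (ln N)^2\<rceil>)) (all_walks_done N)"
      by linarith
  qed
qed

theorem lemma1:
  fixes g :: "nat \<Rightarrow> real" and \<beta> \<sigma> h c\<^sub>L :: real
  assumes g_growth: "\<forall>l>0. eventually (\<lambda>N. l * ln (real N) < g N \<and> g N < l * real N) sequentially"
    and beta: "1/2 < \<beta>" "\<beta> < 1"
    and sigma: "11 \<le> \<sigma>"
    and h_def: "h = 16 * \<sigma> / (1 - \<beta>)"
    and cL: "0 < c\<^sub>L"
  shows "\<exists>C>0. \<forall>N E L.
           simple_graph N E \<and> connected_graph N E \<and> \<not> bipartite_graph N E \<and>
           ln (real N) < g N \<and>
           nearly_uniform_length N E L \<and> real L \<le> c\<^sub>L * ln (real N)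
           \<longrightarrow> measure_pmf.prob (dissem N E (nat \<lceil>h * g N\<rceil>) L (nat \<lceil>C * (ln (real N))^2\<rceil>))
                 (all_walks_done N)
               \<ge> 1 - 1 / real N powr (h / 3)"
proof -
  have h: "16 \<le> h"
  proof -
    have "16 * \<sigma> \<le> 16 * \<sigma> / (1 - \<beta>)"
      using beta sigma by (simp add: le_divide_eq)
    then show ?thesis
      using h_def sigma by linarith
  qed
  obtain C where C: "0 < C" and completes: "\<And>N E k L. simple_graph N E \<Longrightarrow> 2 \<le> N \<Longrightarrow>
      h * ln N \<le> real k \<Longrightarrow> real L \<le> c\<^sub>L * ln N \<Longrightarrow>
      1 - 1 / N powr (h / 3) \<le> measure_pmf.prob (dissem N E k L (nat \<lceil>C * (ln N)^2\<rceil>)) (all_walks_done N)"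
    using dissem_completes_whp[OF h cL] by blast
  show ?thesis
  proof (intro exI[of _ C] conjI allI impI C)
    fix N E L
    assume "simple_graph N E \<and> connected_graph N E \<and> \<not> bipartite_graph N E \<and> ln (real N) < g N
      \<and> nearly_uniform_length N E L \<and> real L \<le> c\<^sub>L * ln (real N)"
    \<comment> \<open>Connectivity and the mixing property of \<open>L\<close> concern where the walks end, not how long
      they take; of the growth condition on \<open>g\<close> only \<open>ln N < g N\<close> is needed.\<close>
    then have G: "simple_graph N E" and N: "2 \<le> N" and g: "ln N < g N" and L: "real L \<le> c\<^sub>L * ln N"
      using two_le_if_not_bipartite by auto
    have k: "h * ln N \<le> real (nat \<lceil>h * g N\<rceil>)"
      using mult_left_mono[OF less_imp_le[OF g], of h] h by linarith
    show "1 - 1 / N powr (h / 3)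
        \<le> measure_pmf.prob (dissem N E (nat \<lceil>h * g N\<rceil>) L (nat \<lceil>C * (ln N)^2\<rceil>)) (all_walks_done N)"
      by (rule completes[OF G N k L])
  qed
qed

end
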